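(* Consider the following chemical reaction network (the ERK cascade with three phosphatases and no feedback) with 22 species RAF, pRAF, MEK, pMEK, ppMEK, ERK, pERK, ppERK, RAS, RAFPH, MEKPH, ERKPH, RAS-RAF, MEK-pRAF, pMEK-pRAF, ERK-ppMEK, pERK-ppMEK, RAF-RAFPH, ppMEK-MEKPH, pMEK-MEKPH, ppERK-ERKPH, pERK-ERKPH (each a separate species; names with a hyphen denote complexes formed by binding) and 30 reactions with rate constants $k_1,\dots,k_{30}$: RAF + RAS $\underset{k_2}{\overset{k_1}{\rightleftarrows}}$ RAS-RAF $\overset{k_3}{\to}$ pRAF + RAS; pRAF + RAFPH $\underset{k_5}{\overset{k_4}{\rightleftarrows}}$ RAF-RAFPH $\overset{k_6}{\to}$ RAF + RAFPH; MEK + pRAF $\underset{k_8}{\overset{k_7}{\rightleftarrows}}$ MEK-pRAF $\overset{k_9}{\to}$ pMEK + pRAF $\underset{k_{11}}{\overset{k_{10}}{\rightleftarrows}}$ pMEK-pRAF $\overset{k_{12}}{\to}$ ppMEK + pRAF; ppMEK + MEKPH $\underset{k_{14}}{\overset{k_{13}}{\rightleftarrows}}$ ppMEK-MEKPH $\overset{k_{15}}{\to}$ pMEK + MEKPH $\underset{k_{17}}{\overset{k_{16}}{\rightleftarrows}}$ pMEK-MEKPH $\overset{k_{18}}{\to}$ MEK + MEKPH; ERK + ppMEK $\underset{k_{20}}{\overset{k_{19}}{\rightleftarrows}}$ ERK-ppMEK $\overset{k_{21}}{\to}$ pERK + ppMEK $\underset{k_{23}}{\overset{k_{22}}{\rightleftarrows}}$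 pERK-ppMEK $\overset{k_{24}}{\to}$ ppERK + ppMEK; ppERK + ERKPH $\underset{k_{26}}{\overset{k_{25}}{\rightleftarrows}}$ ppERK-ERKPH $\overset{k_{27}}{\to}$ pERK + ERKPH $\underset{k_{29}}{\overset{k_{28}}{\rightleftarrows}}$ pERK-ERKPH $\overset{k_{30}}{\to}$ ERK + ERKPH. Then for every choice of positive rate constants $k\in\mathbb{R}^{30}_{>0}$, the associated mass-action system has toric steady states; in particular its steady state ideal is a binomial ideal.
   Context: For a reaction network with species concentrations $x=(x_1,\dots,x_s)$ and reactions $y\to y'$ (complexes $y,y'\in\mathbb{Z}_{\ge0}^s$, where a complex is a formal sum of species) with positive rate constants, the mass-action system is $\dot x = f(x;k)=\sum_{\text{reactions } y\to y'} k_{y\to y'}\, x^{y}(y'-y)$, whose components $f_1,\dots,f_s$ are polynomials in $x$. The steady state ideal is $J=\langle f_1,\dots,f_s\rangle\subseteq\mathbb{R}[x_1,\dots,x_s]$. The system has toric steady states if $J$ can be generated by binomials (polynomials with at most two terms) and $J$ admits nonnegative zeros. *)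

theory Defs
  imports Complex_Main "HOL-Library.Poly_Mapping"
begin

(* Multivariate real polynomials in variables x_0, x_1, ... are represented as
  finitely supported maps from monomials (exponent vectors) to real
  coefficients; this type is a commutative ring with convolution product. *)

type_synonym mpoly = "(nat \<Rightarrow>\<^sub>0 nat) \<Rightarrow>\<^sub>0 real"

definition vars :: "mpoly \<Rightarrow> nat set" where
  "vars p = (\<Union>m\<in>Poly_Mapping.keys p. Poly_Mapping.keys (m :: nat \<Rightarrow>\<^sub>0 nat))"

definition poly_in :: "nat \<Rightarrow> mpoly \<Rightarrow> bool" where
  "poly_in s p \<longleftrightarrow> vars p \<subseteq> {..<s}"

definition peval :: "mpoly \<Rightarrow> (nat \<Rightarrow> real) \<Rightarrow> real" where
  "peval p x = (\<Sum>m\<in>Poly_Mapping.keys p. Poly_Mapping.lookup p m * (\<Prod>i\<in>Poly_Mapping.keys m. x i ^ Poly_Mapping.lookup m i))"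

definition ideal_gen :: "nat \<Rightarrow> mpoly set \<Rightarrow> mpoly set" where
  "ideal_gen s F = {p. \<exists>S c. finite S \<and> S \<subseteq> F \<and> (\<forall>f\<in>S. poly_in s (c f)) \<and>
                          p = (\<Sum>f\<in>S. c f * f)}"

definition is_binomial :: "mpoly \<Rightarrow> bool" where
  "is_binomial p \<longleftrightarrow> card (Poly_Mapping.keys p) \<le> 2"

text \<open>A reaction is a pair (reactant complex y, product complex y') of complexes
  y, y' in Z_{\<ge>0}^s (exponent vectors).\<close>
type_synonym complex = "nat \<Rightarrow>\<^sub>0 nat"

text \<open>Component i of the mass-action vector field f(x;k) = sum_r k_r x^y (y' - y),
  for a list of reactions R, where reaction R!j has rate constant k (Suc j).\<close>
definition mass_action_poly :: "(complex \<times> complex) list \<Rightarrow> (nat \<Rightarrow> real) \<Rightarrow> nat \<Rightarrow> mpoly" where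
  "mass_action_poly R k i =
     (\<Sum>j<length R. Poly_Mapping.single (fst (R!j))
        (k (Suc j) * (real (Poly_Mapping.lookup (snd (R!j)) i) - real (Poly_Mapping.lookup (fst (R!j)) i))))"

definition steady_state_ideal :: "nat \<Rightarrow> (complex \<times> complex) list \<Rightarrow> (nat \<Rightarrow> real) \<Rightarrow> mpoly set" where
  "steady_state_ideal s R k = ideal_gen s {mass_action_poly R k i | i. i < s}"

definition has_toric_steady_states :: "nat \<Rightarrow> (complex \<times> complex) list \<Rightarrow> (nat \<Rightarrow> real) \<Rightarrow> bool" where
  "has_toric_steady_states s R k \<longleftrightarrow>
     (\<exists>B. (\<forall>b\<in>B. is_binomial b \<and> poly_in s b) \<and> steady_state_ideal s R k = ideal_gen s B) \<and>
     (\<exists>x. (\<forall>i<s. x i \<ge> 0) \<and> (\<forall>i<s. peval (mass_action_poly R k i) x = 0))"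

definition "RAF = (0::nat)"
definition "pRAF = (1::nat)"
definition "MEK = (2::nat)"
definition "pMEK = (3::nat)"
definition "ppMEK = (4::nat)"
definition "ERK = (5::nat)"
definition "pERK = (6::nat)"
definition "ppERK = (7::nat)"
definition "RAS = (8::nat)"
definition "RAFPH = (9::nat)"
definition "MEKPH = (10::nat)"
definition "ERKPH = (11::nat)"
definition "RAS_RAF = (12::nat)"
definition "MEK_pRAF = (13::nat)"
definition "pMEK_pRAF = (14::nat)"
definition "ERK_ppMEK = (15::nat)"
definition "pERK_ppMEK = (16::nat)"
definition "RAF_RAFPH = (17::nat)"
definition "ppMEK_MEKPH = (18::nat)"
definition "pMEK_MEKPH = (19::nat)"
definition "ppERK_ERKPH = (20::nat)"
definition "pERK_ERKPH = (21::nat)"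

definition sp :: "nat \<Rightarrow> complex" where
  "sp i = Poly_Mapping.single i 1"

definition erk_network :: "(complex \<times> complex) list" where
  "erk_network = [
    (sp RAF + sp RAS, sp RAS_RAF),            \<comment> \<open>k1\<close>
    (sp RAS_RAF, sp RAF + sp RAS),            \<comment> \<open>k2\<close>
    (sp RAS_RAF, sp pRAF + sp RAS),           \<comment> \<open>k3\<close>
    (sp pRAF + sp RAFPH, sp RAF_RAFPH),       \<comment> \<open>k4\<close>
    (sp RAF_RAFPH, sp pRAF + sp RAFPH),       \<comment> \<open>k5\<close>
    (sp RAF_RAFPH, sp RAF + sp RAFPH),        \<comment> \<open>k6\<close>
    (sp MEK + sp pRAF, sp MEK_pRAF),          \<comment> \<open>k7\<close>
    (sp MEK_pRAF, sp MEK + sp pRAF),          \<comment> \<open>k8\<close>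
    (sp MEK_pRAF, sp pMEK + sp pRAF),         \<comment> \<open>k9\<close>
    (sp pMEK + sp pRAF, sp pMEK_pRAF),        \<comment> \<open>k10\<close>
    (sp pMEK_pRAF, sp pMEK + sp pRAF),        \<comment> \<open>k11\<close>
    (sp pMEK_pRAF, sp ppMEK + sp pRAF),       \<comment> \<open>k12\<close>
    (sp ppMEK + sp MEKPH, sp ppMEK_MEKPH),    \<comment> \<open>k13\<close>
    (sp ppMEK_MEKPH, sp ppMEK + sp MEKPH),    \<comment> \<open>k14\<close>
    (sp ppMEK_MEKPH, sp pMEK + sp MEKPH),     \<comment> \<open>k15\<close>
    (sp pMEK + sp MEKPH, sp pMEK_MEKPH),      \<comment> \<open>k16\<close>
    (sp pMEK_MEKPH, sp pMEK + sp MEKPH),      \<comment> \<open>k17\<close>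
    (sp pMEK_MEKPH, sp MEK + sp MEKPH),       \<comment> \<open>k18\<close>
    (sp ERK + sp ppMEK, sp ERK_ppMEK),        \<comment> \<open>k19\<close>
    (sp ERK_ppMEK, sp ERK + sp ppMEK),        \<comment> \<open>k20\<close>
    (sp ERK_ppMEK, sp pERK + sp ppMEK),       \<comment> \<open>k21\<close>
    (sp pERK + sp ppMEK, sp pERK_ppMEK),      \<comment> \<open>k22\<close>
    (sp pERK_ppMEK, sp pERK + sp ppMEK),      \<comment> \<open>k23\<close>
    (sp pERK_ppMEK, sp ppERK + sp ppMEK),     \<comment> \<open>k24\<close>
    (sp ppERK + sp ERKPH, sp ppERK_ERKPH),    \<comment> \<open>k25\<close>
    (sp ppERK_ERKPH, sp ppERK + sp ERKPH),    \<comment> \<open>k26\<close>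
    (sp ppERK_ERKPH, sp pERK + sp ERKPH),     \<comment> \<open>k27\<close>
    (sp pERK + sp ERKPH, sp pERK_ERKPH),      \<comment> \<open>k28\<close>
    (sp pERK_ERKPH, sp pERK + sp ERKPH),      \<comment> \<open>k29\<close>
    (sp pERK_ERKPH, sp ERK + sp ERKPH)        \<comment> \<open>k30\<close>
  ]"

end

theory Submission
  imports Defs
begin

text \<open>The steady-state polynomial of each of the ten intermediate complexes c is a binomial
  k_on x^y - (k_off + k_cat) x_c, since c is formed in exactly one binding reaction y \<rightarrow> c.
  For RAF, MEK, ERK, ppERK and ppMEK, adding the polynomials of the intermediates that the
  species forms cancels all binding and unbinding terms and leaves a binomial in two
  intermediates.  The remaining seven polynomials (RAS, the three phosphatases, pRAF, pMEK,
  pERK) are eliminated by the seven conservation laws of the network, each of which says that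
  a sum of steady-state polynomials vanishes identically.  So these 15 binomials generate the
  steady state ideal.  The origin is a nonnegative steady state because no reactant complex
  is empty.\<close>

lemma vars_add: "vars (p + q) \<subseteq> vars p \<union> vars q"
  unfolding vars_def using keys_add[of p q] by blast

lemma vars_mult: "vars (p * q) \<subseteq> vars p \<union> vars q"
proof
  fix v assume "v \<in> vars (p * q)"
  then obtain m where m: "m \<in> Poly_Mapping.keys (p * q)" "v \<in> Poly_Mapping.keys m"
    unfolding vars_def by blast
  then obtain a b where "m = a + b" "a \<in> Poly_Mapping.keys p" "b \<in> Poly_Mapping.keys q"
    using keys_mult[of p q] by blast
  with m(2) show "v \<in> vars p \<union> vars q"
    using keys_add[of a b] unfolding vars_def by blast
qed

lemma poly_in_add: "poly_in s p \<Longrightarrow> poly_in s q \<Longrightarrow> poly_in s (p + q)"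
  unfolding poly_in_def using vars_add by blast

lemma poly_in_mult: "poly_in s p \<Longrightarrow> poly_in s q \<Longrightarrow> poly_in s (p * q)"
  unfolding poly_in_def using vars_mult by blast

lemma poly_in_0: "poly_in s 0"
  unfolding poly_in_def vars_def by simp

lemma poly_in_1: "poly_in s 1"
  unfolding poly_in_def vars_def by simp

lemma poly_in_single_diff:
  assumes "Poly_Mapping.keys m \<subseteq> {..<s}" and "Poly_Mapping.keys m' \<subseteq> {..<s}"
  shows "poly_in s (Poly_Mapping.single m a - Poly_Mapping.single m' b)"
  using keys_diff[of "Poly_Mapping.single m a" "Poly_Mapping.single m' b"] assms
  unfolding poly_in_def vars_def by (auto split: if_splits)

lemma is_binomial_single_diff:
  "is_binomial (Poly_Mapping.single m a - Poly_Mapping.single m' b)"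
proof -
  have "card (Poly_Mapping.keys (Poly_Mapping.single m a - Poly_Mapping.single m' b)) \<le> card {m, m'}"
    using keys_diff[of "Poly_Mapping.single m a" "Poly_Mapping.single m' b"]
    by (intro card_mono) (auto split: if_splits)
  also have "\<dots> \<le> 2"
    by (simp add: card_insert_le_m1)
  finally show ?thesis
    unfolding is_binomial_def .
qed

lemma ideal_gen_0: "0 \<in> ideal_gen s F"
  unfolding ideal_gen_def by (intro CollectI exI[of _ "{}"]) simp

lemma ideal_gen_base: "f \<in> F \<Longrightarrow> f \<in> ideal_gen s F"
  unfolding ideal_gen_def
  by (intro CollectI exI[of _ "{f}"] exI[of _ "\<lambda>_. 1"]) (simp add: poly_in_1)

lemma ideal_gen_add:
  assumes "p \<in> ideal_gen s F" and "q \<in> ideal_gen s F"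
  shows "p + q \<in> ideal_gen s F"
proof -
  obtain S c where S: "finite S" "S \<subseteq> F" "\<forall>f\<in>S. poly_in s (c f)" "p = (\<Sum>f\<in>S. c f * f)"
    using assms(1) unfolding ideal_gen_def by blast
  obtain T d where T: "finite T" "T \<subseteq> F" "\<forall>f\<in>T. poly_in s (d f)" "q = (\<Sum>f\<in>T. d f * f)"
    using assms(2) unfolding ideal_gen_def by blast
  define c' where "c' f = (if f \<in> S then c f else 0)" for f
  define d' where "d' f = (if f \<in> T then d f else 0)" for f
  have "p = (\<Sum>f\<in>S \<union> T. c' f * f)"
    unfolding S(4) c'_def using S(1) T(1) by (intro sum.mono_neutral_cong_left) auto
  moreover have "q = (\<Sum>f\<in>S \<union> T. d' f * f)"
    unfolding T(4) d'_def using S(1) T(1) by (intro sum.mono_neutral_cong_left) auto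
  ultimately have "p + q = (\<Sum>f\<in>S \<union> T. (c' f + d' f) * f)"
    by (simp add: sum.distrib distrib_right)
  moreover have "\<forall>f\<in>S \<union> T. poly_in s (c' f + d' f)"
    using S(3) T(3) unfolding c'_def d'_def by (auto intro!: poly_in_add simp: poly_in_0)
  ultimately show ?thesis
    unfolding ideal_gen_def using S(1,2) T(1,2)
    by (intro CollectI exI[of _ "S \<union> T"] exI[of _ "\<lambda>f. c' f + d' f"]) simp
qed

lemma ideal_gen_mult:
  assumes "p \<in> ideal_gen s F" and "poly_in s q"
  shows "q * p \<in> ideal_gen s F"
proof -
  obtain S c where S: "finite S" "S \<subseteq> F" "\<forall>f\<in>S. poly_in s (c f)" "p = (\<Sum>f\<in>S. c f * f)"
    using assms(1) unfolding ideal_gen_def by blast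
  have "q * p = (\<Sum>f\<in>S. (q * c f) * f)"
    unfolding S(4) by (simp add: sum_distrib_left mult.assoc)
  moreover have "\<forall>f\<in>S. poly_in s (q * c f)"
    using S(3) assms(2) by (auto intro: poly_in_mult)
  ultimately show ?thesis
    unfolding ideal_gen_def using S(1,2) by (intro CollectI exI[of _ S] exI[of _ "\<lambda>f. q * c f"]) simp
qed

lemma ideal_gen_uminus: "p \<in> ideal_gen s F \<Longrightarrow> - p \<in> ideal_gen s F"
  using ideal_gen_mult[of p s F "- 1"] poly_in_1[of s]
  unfolding poly_in_def vars_def by simp

lemma ideal_gen_diff: "p \<in> ideal_gen s F \<Longrightarrow> q \<in> ideal_gen s F \<Longrightarrow> p - q \<in> ideal_gen s F"
  using ideal_gen_add[of p s F "- q"] ideal_gen_uminus[of q s F] by simp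

lemma ideal_gen_subset:
  assumes "F \<subseteq> ideal_gen s G"
  shows "ideal_gen s F \<subseteq> ideal_gen s G"
proof
  fix p assume "p \<in> ideal_gen s F"
  then obtain S c where S: "finite S" "S \<subseteq> F" "\<forall>f\<in>S. poly_in s (c f)" "p = (\<Sum>f\<in>S. c f * f)"
    unfolding ideal_gen_def by blast
  from S(1-3) have "(\<Sum>f\<in>S. c f * f) \<in> ideal_gen s G"
  proof (induction S rule: finite_induct)
    case empty
    then show ?case by (simp add: ideal_gen_0)
  next
    case (insert f S)
    then show ?case
      using assms by (auto intro!: ideal_gen_add ideal_gen_mult)
  qed
  with S(4) show "p \<in> ideal_gen s G" by simp
qed

lemma ideal_gen_sum:
  "(\<And>i. i \<in> I \<Longrightarrow> f i \<in> ideal_gen s F) \<Longrightarrow> (\<Sum>i\<in>I. f i) \<in> ideal_gen s F"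
  by (induction I rule: infinite_finite_induct) (simp_all add: ideal_gen_0 ideal_gen_add)

lemma ideal_gen_sum_remove:
  assumes "finite I" and "j \<in> I" and "(\<Sum>i\<in>I. f i) \<in> ideal_gen s F"
    and "\<And>i. i \<in> I - {j} \<Longrightarrow> f i \<in> ideal_gen s F"
  shows "f j \<in> ideal_gen s F"
proof -
  have "f j = (\<Sum>i\<in>I. f i) - (\<Sum>i\<in>I - {j}. f i)"
    using assms(1,2) by (simp add: sum.remove)
  also have "\<dots> \<in> ideal_gen s F"
    using assms(4) by (intro ideal_gen_diff[OF assms(3)] ideal_gen_sum)
  finally show ?thesis .
qed

lemma ideal_gen_eqI:
  "F \<subseteq> ideal_gen s G \<Longrightarrow> G \<subseteq> ideal_gen s F \<Longrightarrow> ideal_gen s F = ideal_gen s G"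
  using ideal_gen_subset by blast

lemma peval_at_origin: "peval p (\<lambda>_. 0) = Poly_Mapping.lookup p 0"
proof -
  have monomial_at_origin: "(\<Prod>i\<in>Poly_Mapping.keys m. (0::real) ^ Poly_Mapping.lookup m i) = (if m = 0 then 1 else 0)" for m
  proof (cases "m = 0")
    case False
    then obtain i where "i \<in> Poly_Mapping.keys m"
      by (metis keys_eq_empty ex_in_conv)
    with False show ?thesis
      by (auto simp: in_keys_iff intro!: prod_zero)
  qed simp
  have "peval p (\<lambda>_. 0) = (\<Sum>m\<in>Poly_Mapping.keys p. Poly_Mapping.lookup p m * (if m = 0 then 1 else 0))"
    unfolding peval_def by (simp only: monomial_at_origin)
  also have "\<dots> = Poly_Mapping.lookup p 0"
    by (simp add: if_distrib[of "(*) _"] sum.delta in_keys_iff cong: if_cong)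
  finally show ?thesis .
qed

lemma mass_action_poly_vanishes_at_origin:
  assumes "\<forall>(y, y')\<in>set R. y \<noteq> 0"
  shows "peval (mass_action_poly R k i) (\<lambda>_. 0) = 0"
  unfolding peval_at_origin mass_action_poly_def lookup_sum
  using assms by (intro sum.neutral) (force simp: lookup_single when_def case_prod_beta dest: nth_mem)

lemma single_sum: "Poly_Mapping.single m (\<Sum>i\<in>I. f i) = (\<Sum>i\<in>I. Poly_Mapping.single m (f i))"
  by (induction I rule: infinite_finite_induct) (simp_all add: single_add)

lemma mass_action_poly_Nil: "mass_action_poly [] k i = 0"
  by (simp add: mass_action_poly_def)

lemma mass_action_poly_Cons:
  "mass_action_poly ((y, y') # R) k i =
     Poly_Mapping.single y (k 1 * (real (Poly_Mapping.lookup y' i) - real (Poly_Mapping.lookup y i)))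
     + mass_action_poly R (\<lambda>j. k (Suc j)) i"
  unfolding mass_action_poly_def by (simp add: sum.lessThan_Suc_shift del: sum.lessThan_Suc)

lemma sum_mass_action_poly_Cons:
  "(\<Sum>i\<in>I. mass_action_poly ((y, y') # R) k i) =
     Poly_Mapping.single y (k 1 * (\<Sum>i\<in>I. real (Poly_Mapping.lookup y' i) - real (Poly_Mapping.lookup y i)))
     + (\<Sum>i\<in>I. mass_action_poly R (\<lambda>j. k (Suc j)) i)"
  by (simp add: mass_action_poly_Cons sum.distrib sum_distrib_left single_sum)

lemma lookup_sp: "Poly_Mapping.lookup (sp a) i = (if a = i then 1 else 0)"
  by (simp add: sp_def lookup_single when_def)

lemma sum_lookup_sp:
  "finite I \<Longrightarrow> (\<Sum>i\<in>I. real (Poly_Mapping.lookup (sp a) i)) = (if a \<in> I then 1 else 0)"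
  by (simp add: lookup_sp sum.delta' if_distrib[of real] cong: if_cong)

lemma keys_sp: "Poly_Mapping.keys (sp a) = {a}"
  by (simp add: sp_def)

lemma keys_sp_add: "Poly_Mapping.keys (sp i + sp j) = {i, j}"
  by (auto simp: in_keys_iff lookup_add lookup_sp split: if_splits)

lemmas species_defs = RAF_def pRAF_def MEK_def pMEK_def ppMEK_def ERK_def pERK_def ppERK_def
  RAS_def RAFPH_def MEKPH_def ERKPH_def RAS_RAF_def MEK_pRAF_def pMEK_pRAF_def ERK_ppMEK_def
  pERK_ppMEK_def RAF_RAFPH_def ppMEK_MEKPH_def pMEK_MEKPH_def ppERK_ERKPH_def pERK_ERKPH_def

abbreviation erk_poly :: "(nat \<Rightarrow> real) \<Rightarrow> nat \<Rightarrow> mpoly" where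
  "erk_poly k \<equiv> mass_action_poly erk_network k"

text \<open>Unfolding the network shifts the rate constants to k (Suc (\<dots> (Suc j))), which is why
  the computations below rewrite numerals with numeral_eq_Suc.\<close>

lemma erk_intermediate_poly:
  "erk_poly k RAS_RAF =
     Poly_Mapping.single (sp RAF + sp RAS) (k 1) - Poly_Mapping.single (sp RAS_RAF) (k 2 + k 3)"
  "erk_poly k RAF_RAFPH =
     Poly_Mapping.single (sp pRAF + sp RAFPH) (k 4) - Poly_Mapping.single (sp RAF_RAFPH) (k 5 + k 6)"
  "erk_poly k MEK_pRAF =
     Poly_Mapping.single (sp MEK + sp pRAF) (k 7) - Poly_Mapping.single (sp MEK_pRAF) (k 8 + k 9)"
  "erk_poly k pMEK_pRAF =
     Poly_Mapping.single (sp pMEK + sp pRAF) (k 10) - Poly_Mapping.single (sp pMEK_pRAF) (k 11 + k 12)"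
  "erk_poly k ppMEK_MEKPH =
     Poly_Mapping.single (sp ppMEK + sp MEKPH) (k 13) - Poly_Mapping.single (sp ppMEK_MEKPH) (k 14 + k 15)"
  "erk_poly k pMEK_MEKPH =
     Poly_Mapping.single (sp pMEK + sp MEKPH) (k 16) - Poly_Mapping.single (sp pMEK_MEKPH) (k 17 + k 18)"
  "erk_poly k ERK_ppMEK =
     Poly_Mapping.single (sp ERK + sp ppMEK) (k 19) - Poly_Mapping.single (sp ERK_ppMEK) (k 20 + k 21)"
  "erk_poly k pERK_ppMEK =
     Poly_Mapping.single (sp pERK + sp ppMEK) (k 22) - Poly_Mapping.single (sp pERK_ppMEK) (k 23 + k 24)"
  "erk_poly k ppERK_ERKPH =
     Poly_Mapping.single (sp ppERK + sp ERKPH) (k 25) - Poly_Mapping.single (sp ppERK_ERKPH) (k 26 + k 27)"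
  "erk_poly k pERK_ERKPH =
     Poly_Mapping.single (sp pERK + sp ERKPH) (k 28) - Poly_Mapping.single (sp pERK_ERKPH) (k 29 + k 30)"
  unfolding erk_network_def mass_action_poly_Cons mass_action_poly_Nil
  by (simp_all add: lookup_add lookup_sp species_defs numeral_eq_Suc single_add single_diff single_uminus
      algebra_simps)

lemmas erk_sum_simps = erk_network_def sum_mass_action_poly_Cons mass_action_poly_Nil sum.neutral_const

lemma erk_catalytic_sums:
  "(\<Sum>i\<in>{RAF, RAS_RAF}. erk_poly k i) =
     Poly_Mapping.single (sp RAF_RAFPH) (k 6) - Poly_Mapping.single (sp RAS_RAF) (k 3)"
  "(\<Sum>i\<in>{MEK, MEK_pRAF}. erk_poly k i) =
     Poly_Mapping.single (sp pMEK_MEKPH) (k 18) - Poly_Mapping.single (sp MEK_pRAF) (k 9)"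
  "(\<Sum>i\<in>{ERK, ERK_ppMEK}. erk_poly k i) =
     Poly_Mapping.single (sp pERK_ERKPH) (k 30) - Poly_Mapping.single (sp ERK_ppMEK) (k 21)"
  "(\<Sum>i\<in>{ppERK, ppERK_ERKPH}. erk_poly k i) =
     Poly_Mapping.single (sp pERK_ppMEK) (k 24) - Poly_Mapping.single (sp ppERK_ERKPH) (k 27)"
  "(\<Sum>i\<in>{ppMEK, ppMEK_MEKPH, ERK_ppMEK, pERK_ppMEK}. erk_poly k i) =
     Poly_Mapping.single (sp pMEK_pRAF) (k 12) - Poly_Mapping.single (sp ppMEK_MEKPH) (k 15)"
  unfolding erk_sum_simps
  by (simp_all add: lookup_add sum.distrib sum_subtractf sum_lookup_sp species_defs numeral_eq_Suc
      single_uminus del: sum.insert)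

lemma erk_conservation_laws:
  "(\<Sum>i\<in>{RAS, RAS_RAF}. erk_poly k i) = 0"
  "(\<Sum>i\<in>{RAFPH, RAF_RAFPH}. erk_poly k i) = 0"
  "(\<Sum>i\<in>{MEKPH, ppMEK_MEKPH, pMEK_MEKPH}. erk_poly k i) = 0"
  "(\<Sum>i\<in>{ERKPH, ppERK_ERKPH, pERK_ERKPH}. erk_poly k i) = 0"
  "(\<Sum>i\<in>{RAF, pRAF, RAS_RAF, RAF_RAFPH, MEK_pRAF, pMEK_pRAF}. erk_poly k i) = 0"
  "(\<Sum>i\<in>{MEK, pMEK, ppMEK, MEK_pRAF, pMEK_pRAF, ERK_ppMEK, pERK_ppMEK, ppMEK_MEKPH, pMEK_MEKPH}.
      erk_poly k i) = 0"
  "(\<Sum>i\<in>{ERK, pERK, ppERK, ERK_ppMEK, pERK_ppMEK, ppERK_ERKPH, pERK_ERKPH}. erk_poly k i) = 0"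
  unfolding erk_sum_simps
  by (simp_all add: lookup_add sum.distrib sum_subtractf sum_lookup_sp species_defs numeral_eq_Suc
      del: sum.insert)

definition erk_binomials :: "(nat \<Rightarrow> real) \<Rightarrow> mpoly set" where
  "erk_binomials k =
     erk_poly k ` {RAS_RAF, RAF_RAFPH, MEK_pRAF, pMEK_pRAF, ppMEK_MEKPH, pMEK_MEKPH, ERK_ppMEK,
                   pERK_ppMEK, ppERK_ERKPH, pERK_ERKPH}
     \<union> (\<lambda>I. \<Sum>i\<in>I. erk_poly k i) `
         {{RAF, RAS_RAF}, {MEK, MEK_pRAF}, {ERK, ERK_ppMEK}, {ppERK, ppERK_ERKPH},
          {ppMEK, ppMEK_MEKPH, ERK_ppMEK, pERK_ppMEK}}"

lemma erk_binomials_binomial: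
  assumes "b \<in> erk_binomials k"
  shows "is_binomial b \<and> poly_in 22 b"
  using assms
  unfolding erk_binomials_def image_insert image_empty erk_intermediate_poly erk_catalytic_sums
  by (auto simp: is_binomial_single_diff keys_sp keys_sp_add species_defs intro!: poly_in_single_diff)

lemma erk_poly_in_binomial_ideal:
  assumes "i < 22"
  shows "erk_poly k i \<in> ideal_gen 22 (erk_binomials k)"
proof -
  let ?I = "ideal_gen 22 (erk_binomials k)"
  have intermediate: "erk_poly k c \<in> ?I"
    if "c \<in> {RAS_RAF, RAF_RAFPH, MEK_pRAF, pMEK_pRAF, ppMEK_MEKPH, pMEK_MEKPH, ERK_ppMEK,
              pERK_ppMEK, ppERK_ERKPH, pERK_ERKPH}" for c
    unfolding erk_binomials_def by (intro ideal_gen_base) (use that in blast)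
  have catalytic: "(\<Sum>i\<in>I. erk_poly k i) \<in> ?I"
    if "I \<in> {{RAF, RAS_RAF}, {MEK, MEK_pRAF}, {ERK, ERK_ppMEK}, {ppERK, ppERK_ERKPH},
              {ppMEK, ppMEK_MEKPH, ERK_ppMEK, pERK_ppMEK}}" for I
    unfolding erk_binomials_def by (intro ideal_gen_base) (use that in blast)
  have conserved: "(\<Sum>i\<in>I. erk_poly k i) \<in> ?I" if "(\<Sum>i\<in>I. erk_poly k i) = 0" for I
    using that by (simp add: ideal_gen_0)
  have RAF: "erk_poly k RAF \<in> ?I"
    by (rule ideal_gen_sum_remove[OF _ _ catalytic, of "{RAF, RAS_RAF}"]) (auto intro: intermediate)
  have MEK: "erk_poly k MEK \<in> ?I"
    by (rule ideal_gen_sum_remove[OF _ _ catalytic, of "{MEK, MEK_pRAF}"]) (auto intro: intermediate)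
  have ERK: "erk_poly k ERK \<in> ?I"
    by (rule ideal_gen_sum_remove[OF _ _ catalytic, of "{ERK, ERK_ppMEK}"]) (auto intro: intermediate)
  have ppERK: "erk_poly k ppERK \<in> ?I"
    by (rule ideal_gen_sum_remove[OF _ _ catalytic, of "{ppERK, ppERK_ERKPH}"])
      (auto intro: intermediate)
  have ppMEK: "erk_poly k ppMEK \<in> ?I"
    by (rule ideal_gen_sum_remove[OF _ _ catalytic, of "{ppMEK, ppMEK_MEKPH, ERK_ppMEK, pERK_ppMEK}"])
      (auto intro: intermediate)
  have RAS: "erk_poly k RAS \<in> ?I"
    by (rule ideal_gen_sum_remove[OF _ _ conserved[OF erk_conservation_laws(1)]])
      (auto intro: intermediate)
  have RAFPH: "erk_poly k RAFPH \<in> ?I"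
    by (rule ideal_gen_sum_remove[OF _ _ conserved[OF erk_conservation_laws(2)]])
      (auto intro: intermediate)
  have MEKPH: "erk_poly k MEKPH \<in> ?I"
    by (rule ideal_gen_sum_remove[OF _ _ conserved[OF erk_conservation_laws(3)]])
      (auto intro: intermediate)
  have ERKPH: "erk_poly k ERKPH \<in> ?I"
    by (rule ideal_gen_sum_remove[OF _ _ conserved[OF erk_conservation_laws(4)]])
      (auto intro: intermediate)
  have pRAF: "erk_poly k pRAF \<in> ?I"
    by (rule ideal_gen_sum_remove[OF _ _ conserved[OF erk_conservation_laws(5)]])
      (auto intro: intermediate RAF)
  have pMEK: "erk_poly k pMEK \<in> ?I"
    by (rule ideal_gen_sum_remove[OF _ _ conserved[OF erk_conservation_laws(6)]])
      (auto intro: intermediate MEK ppMEK)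
  have pERK: "erk_poly k pERK \<in> ?I"
    by (rule ideal_gen_sum_remove[OF _ _ conserved[OF erk_conservation_laws(7)]])
      (auto intro: intermediate ERK ppERK)
  have "i \<in> {RAF, pRAF, MEK, pMEK, ppMEK, ERK, pERK, ppERK, RAS, RAFPH, MEKPH, ERKPH, RAS_RAF,
             MEK_pRAF, pMEK_pRAF, ERK_ppMEK, pERK_ppMEK, RAF_RAFPH, ppMEK_MEKPH, pMEK_MEKPH,
             ppERK_ERKPH, pERK_ERKPH}"
    using assms by (simp add: species_defs numeral_eq_Suc less_Suc_eq)
  then show ?thesis
    using RAF MEK ERK ppERK ppMEK RAS RAFPH MEKPH ERKPH pRAF pMEK pERK intermediate by blast
qed

lemma erk_steady_state_ideal:
  "steady_state_ideal 22 erk_network k = ideal_gen 22 (erk_binomials k)"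
proof -
  have "{erk_poly k i | i. i < 22} \<subseteq> ideal_gen 22 (erk_binomials k)"
    using erk_poly_in_binomial_ideal by blast
  moreover have "erk_binomials k \<subseteq> ideal_gen 22 {erk_poly k i | i. i < 22}"
  proof -
    have "erk_poly k i \<in> ideal_gen 22 {erk_poly k i | i. i < 22}" if "i < 22" for i
      by (rule ideal_gen_base) (use that in blast)
    then show ?thesis
      unfolding erk_binomials_def image_insert image_empty
      by (intro Un_least insert_subsetI empty_subsetI ideal_gen_sum) (auto simp: species_defs)
  qed
  ultimately show ?thesis
    unfolding steady_state_ideal_def by (rule ideal_gen_eqI)
qed

lemma erk_reactants_nonzero: "\<forall>(y, y')\<in>set erk_network. y \<noteq> 0"
  unfolding erk_network_def by (simp add: keys_sp keys_sp_add flip: keys_eq_empty)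

theorem mainTheorem1:
  fixes k :: "nat \<Rightarrow> real"
  assumes "\<forall>j\<in>{1..30}. k j > 0"
  shows "has_toric_steady_states 22 erk_network k \<and>
         (\<exists>B. (\<forall>b\<in>B. is_binomial b \<and> poly_in 22 b) \<and> steady_state_ideal 22 erk_network k = ideal_gen 22 B)"
proof -
  have binomial_ideal:
    "\<exists>B. (\<forall>b\<in>B. is_binomial b \<and> poly_in 22 b) \<and> steady_state_ideal 22 erk_network k = ideal_gen 22 B"
    by (intro exI[of _ "erk_binomials k"] conjI ballI erk_binomials_binomial erk_steady_state_ideal)
  have origin: "\<exists>x. (\<forall>i<22. x i \<ge> 0) \<and> (\<forall>i<22. peval (erk_poly k i) x = 0)"
    using mass_action_poly_vanishes_at_origin[OF erk_reactants_nonzero]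
    by (intro exI[of _ "\<lambda>_. 0"]) simp
  show ?thesis
    unfolding has_toric_steady_states_def using binomial_ideal origin by blast
qed

end
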